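(* Let $\mu_1,\mu_2\in\mathbb{R}$, $\sigma_1,\sigma_2>0$ and $k>0$. Consider two stocks with positive prices $p_{it}$, $i=1,2$, at discrete times $t=0,1,2,\dots$, with deterministic equal initial log-prices $\log p_{10}=\log p_{20}$ and $$\log(p_{i,t+1})=\log(p_{it})+\mu_i+\delta_{i,t+1},$$ where all the $\delta_{it}$ ($i=1,2$, $t\ge1$) are independent and $\delta_{it}\sim N(0,\sigma_i^2)$. Define the spread $\epsilon_t=\log(p_{2t})-\log(p_{1t})-(\mu_2-\mu_1)t$ (so $\epsilon_t\sim N(0,s_t^2)$ with $s_t^2=t(\sigma_1^2+\sigma_2^2)$), the signal $S_t=\mathbb{1}\{\epsilon_t\le -ks_t\}-\mathbb{1}\{\epsilon_t\ge ks_t\}$, stock returns $r_{i,t+1}=p_{i,t+1}/p_{it}-1$, and pair return $r_{t+1}=S_t(r_{2,t+1}-r_{1,t+1})$. Let $Z$ be a standard normal random variable. Then for every $t\ge1$, $$\mathbf{E}[r_{t+1}]=0,\qquad \operatorname{Var}(r_{t+1})=2\,\mathbf{P}(Z\ge k)\Big(e^{2\mu_1+2\sigma_1^2}+e^{2\mu_2+2\sigma_2^2}-2e^{\mu_1+\mu_2+\sigma_1^2/2+\sigma_2^2/2}\Big).$$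
   Context: This models a non-cointegrated pair: both log-prices follow independent Gaussian random walks with drift. *)

theory Defs
  imports "HOL-Probability.Probability"
begin

primrec logp :: "real \<Rightarrow> (nat \<Rightarrow> real) \<Rightarrow> (nat \<Rightarrow> nat \<Rightarrow> 'a \<Rightarrow> real) \<Rightarrow> nat \<Rightarrow> nat \<Rightarrow> 'a \<Rightarrow> real" where
  "logp l0 mu delta i 0 \<omega> = l0"
| "logp l0 mu delta i (Suc t) \<omega> = logp l0 mu delta i t \<omega> + mu i + delta i (Suc t) \<omega>"

definition price :: "real \<Rightarrow> (nat \<Rightarrow> real) \<Rightarrow> (nat \<Rightarrow> nat \<Rightarrow> 'a \<Rightarrow> real) \<Rightarrow> nat \<Rightarrow> nat \<Rightarrow> 'a \<Rightarrow> real" where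
  "price l0 mu delta i t \<omega> = exp (logp l0 mu delta i t \<omega>)"

definition spread :: "real \<Rightarrow> (nat \<Rightarrow> real) \<Rightarrow> (nat \<Rightarrow> nat \<Rightarrow> 'a \<Rightarrow> real) \<Rightarrow> nat \<Rightarrow> 'a \<Rightarrow> real" where
  "spread l0 mu delta t \<omega> =
     ln (price l0 mu delta 2 t \<omega>) - ln (price l0 mu delta 1 t \<omega>) - (mu 2 - mu 1) * real t"

definition spread_sd :: "(nat \<Rightarrow> real) \<Rightarrow> nat \<Rightarrow> real" where
  "spread_sd sd t = sqrt (real t * ((sd 1)\<^sup>2 + (sd 2)\<^sup>2))"

definition signal :: "real \<Rightarrow> (nat \<Rightarrow> real) \<Rightarrow> (nat \<Rightarrow> real) \<Rightarrow> real \<Rightarrow> (nat \<Rightarrow> nat \<Rightarrow> 'a \<Rightarrow> real) \<Rightarrow> nat \<Rightarrow> 'a \<Rightarrow> real" where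
  "signal l0 mu sd k delta t \<omega> =
     (if spread l0 mu delta t \<omega> \<le> - k * spread_sd sd t then 1 else 0)
   - (if spread l0 mu delta t \<omega> \<ge> k * spread_sd sd t then 1 else 0)"

definition stock_return :: "real \<Rightarrow> (nat \<Rightarrow> real) \<Rightarrow> (nat \<Rightarrow> nat \<Rightarrow> 'a \<Rightarrow> real) \<Rightarrow> nat \<Rightarrow> nat \<Rightarrow> 'a \<Rightarrow> real" where
  "stock_return l0 mu delta i t \<omega> = price l0 mu delta i (Suc t) \<omega> / price l0 mu delta i t \<omega> - 1"

definition pair_return :: "real \<Rightarrow> (nat \<Rightarrow> real) \<Rightarrow> (nat \<Rightarrow> real) \<Rightarrow> real \<Rightarrow> (nat \<Rightarrow> nat \<Rightarrow> 'a \<Rightarrow> real) \<Rightarrow> nat \<Rightarrow> 'a \<Rightarrow> real" where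
  "pair_return l0 mu sd k delta t \<omega> =
     signal l0 mu sd k delta t \<omega> *
       (stock_return l0 mu delta 2 t \<omega> - stock_return l0 mu delta 1 t \<omega>)"

end

theory Submission
  imports Defs
begin

text \<open>The signal S_t depends only on the innovations up to time t, while
  r_(2,t+1) - r_(1,t+1) = exp (mu_2 + delta_(2,t+1)) - exp (mu_1 + delta_(1,t+1)) depends only on
  those at time t+1. Hence the two factors of the pair return are independent, and once E S_t = 0
  both its mean and its variance factorise. The spread is a signed sum of independent centred
  normals, so it is N(0, s_t^2); by symmetry both bands are entered with probability P(Z >= k),
  which gives E S_t = 0 and E S_t^2 = 2 P(Z >= k). The second moment of the return difference
  follows from the lognormal moments E exp (a X) = exp (a^2 sigma^2 / 2) and independence of the
  two legs.\<close>

definition band_signal :: "real \<Rightarrow> real \<Rightarrow> real" where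
  "band_signal c x = (if x \<le> - c then 1 else 0) - (if x \<ge> c then 1 else 0)"

lemma band_signal_measurable [measurable]: "band_signal c \<in> borel_measurable borel"
  unfolding band_signal_def by measurable

lemma has_bochner_integral_normal_density_exp:
  fixes \<sigma> a b :: real
  assumes "\<sigma> > 0"
  shows "has_bochner_integral lborel (\<lambda>x. normal_density 0 \<sigma> x * exp (a * x + b))
           (exp (b + a\<^sup>2 * \<sigma>\<^sup>2 / 2))"
proof -
  have shift: "normal_density 0 \<sigma> x * exp (a * x + b) =
      exp (b + a\<^sup>2 * \<sigma>\<^sup>2 / 2) * normal_density (a * \<sigma>\<^sup>2) \<sigma> x" for x
  proof -
    have "- x\<^sup>2 / (2 * \<sigma>\<^sup>2) + (a * x + b) = b + a\<^sup>2 * \<sigma>\<^sup>2 / 2 + - (x - a * \<sigma>\<^sup>2)\<^sup>2 / (2 * \<sigma>\<^sup>2)"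
      using assms by (simp add: field_simps power2_eq_square)
    then show ?thesis
      by (simp add: normal_density_def exp_add[symmetric])
  qed
  have "has_bochner_integral lborel (normal_density (a * \<sigma>\<^sup>2) \<sigma>) 1"
    using assms by (simp add: has_bochner_integral_iff)
  from has_bochner_integral_mult_right[OF this] show ?thesis
    unfolding shift by simp
qed

context prob_space
begin

lemma
  fixes \<sigma> a b :: real
  assumes "\<sigma> > 0" and X: "distributed M lborel X (normal_density 0 \<sigma>)"
  shows integrable_exp_normal: "integrable M (\<lambda>\<omega>. exp (a * X \<omega> + b))"
    and expectation_exp_normal: "expectation (\<lambda>\<omega>. exp (a * X \<omega> + b)) = exp (b + a\<^sup>2 * \<sigma>\<^sup>2 / 2)"
  using distributed_integrable[OF X, of "\<lambda>x. exp (a * x + b)"]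
    distributed_integral[OF X, of "\<lambda>x. exp (a * x + b)"]
    has_bochner_integral_normal_density_exp[OF \<open>\<sigma> > 0\<close>, of a b]
  by (auto simp: has_bochner_integral_iff)

lemma prob_normal_ge:
  assumes "s > 0" and Y: "distributed M lborel Y (normal_density 0 s)"
  shows "prob {\<omega>\<in>space M. c \<le> Y \<omega>} = measure (density lborel std_normal_density) {c / s..}"
proof -
  have Z: "distributed M lborel (\<lambda>\<omega>. Y \<omega> / s) std_normal_density"
    using normal_standard_normal_convert[OF \<open>s > 0\<close>] Y by simp
  have "{\<omega>\<in>space M. c \<le> Y \<omega>} = (\<lambda>\<omega>. Y \<omega> / s) -` {c / s..} \<inter> space M"
    using \<open>s > 0\<close> by (auto simp: divide_le_cancel)
  also have "prob \<dots> = measure (distr M lborel (\<lambda>\<omega>. Y \<omega> / s)) {c / s..}"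
    using distributed_measurable[OF Z] by (simp add: measure_distr)
  also have "distr M lborel (\<lambda>\<omega>. Y \<omega> / s) = density lborel std_normal_density"
    using distributed_distr_eq_density[OF Z] .
  finally show ?thesis .
qed

lemma integrable_band_signal_sq:
  "Y \<in> borel_measurable M \<Longrightarrow> integrable M (\<lambda>\<omega>. (band_signal c (Y \<omega>))\<^sup>2)"
  by (rule integrable_const_bound[where B=1]) (auto simp: band_signal_def)

lemma
  assumes "s > 0" "c > 0" and Y: "distributed M lborel Y (normal_density 0 s)"
  shows expectation_band_signal_normal: "expectation (\<lambda>\<omega>. band_signal c (Y \<omega>)) = 0"
    and expectation_band_signal_normal_sq:
      "expectation (\<lambda>\<omega>. (band_signal c (Y \<omega>))\<^sup>2) = 2 * measure (density lborel std_normal_density) {c / s..}"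
proof -
  have [measurable]: "Y \<in> borel_measurable M"
    using distributed_measurable[OF Y] by simp
  have "distributed M lborel (\<lambda>\<omega>. - Y \<omega>) (normal_density 0 s)"
    using normal_density_affine[OF Y \<open>s > 0\<close>, of "-1" 0] by simp
  from prob_normal_ge[OF \<open>s > 0\<close> this]
  have lower: "prob {\<omega>\<in>space M. Y \<omega> \<le> - c} = measure (density lborel std_normal_density) {c / s..}"
    by (simp add: le_minus_iff)
  have upper: "prob {\<omega>\<in>space M. c \<le> Y \<omega>} = measure (density lborel std_normal_density) {c / s..}"
    by (rule prob_normal_ge[OF \<open>s > 0\<close> Y])
  have events: "{\<omega>\<in>space M. Y \<omega> \<le> - c} \<in> events" "{\<omega>\<in>space M. c \<le> Y \<omega>} \<in> events"
    by measurable
  then have integrable: "integrable M (indicator {\<omega>\<in>space M. Y \<omega> \<le> - c} :: 'a \<Rightarrow> real)"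
      "integrable M (indicator {\<omega>\<in>space M. c \<le> Y \<omega>} :: 'a \<Rightarrow> real)"
    by (simp_all add: emeasure_eq_measure)
  have band_eq: "band_signal c (Y \<omega>) =
      indicator {\<omega>\<in>space M. Y \<omega> \<le> - c} \<omega> - indicator {\<omega>\<in>space M. c \<le> Y \<omega>} \<omega>"
    and band_sq_eq: "(band_signal c (Y \<omega>))\<^sup>2 =
      indicator {\<omega>\<in>space M. Y \<omega> \<le> - c} \<omega> + indicator {\<omega>\<in>space M. c \<le> Y \<omega>} \<omega>"
    if "\<omega> \<in> space M" for \<omega>
    using that \<open>c > 0\<close> by (auto simp: band_signal_def indicator_def)
  show "expectation (\<lambda>\<omega>. band_signal c (Y \<omega>)) = 0"
    using lower upper events integrable
    by (simp add: Bochner_Integration.integral_cong[OF refl band_eq] emeasure_eq_measure)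
  show "expectation (\<lambda>\<omega>. (band_signal c (Y \<omega>))\<^sup>2) = 2 * measure (density lborel std_normal_density) {c / s..}"
    using lower upper events integrable
    by (simp add: Bochner_Integration.integral_cong[OF refl band_sq_eq] emeasure_eq_measure)
qed

lemma indep_vars_imp_indep_var:
  assumes "indep_vars M' X I" "i \<in> I" "j \<in> I" "i \<noteq> j"
  shows "indep_var (M' i) (X i) (M' j) (X j)"
proof -
  have "indep_var (M' i) ((\<lambda>f. f i) \<circ> (\<lambda>\<omega>. restrict (\<lambda>i. X i \<omega>) {i}))
      (M' j) ((\<lambda>f. f j) \<circ> (\<lambda>\<omega>. restrict (\<lambda>i. X i \<omega>) {j}))"
    using assms by (intro indep_var_compose[OF indep_var_restrict[OF assms(1)]]) auto
  then show ?thesis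
    by (simp add: comp_def)
qed

lemma
  fixes X\<^sub>1 X\<^sub>2 :: "'a \<Rightarrow> real"
  assumes "\<sigma>\<^sub>1 > 0" "\<sigma>\<^sub>2 > 0" and indep: "indep_var borel X\<^sub>1 borel X\<^sub>2"
    and X\<^sub>1: "distributed M lborel X\<^sub>1 (normal_density 0 \<sigma>\<^sub>1)"
    and X\<^sub>2: "distributed M lborel X\<^sub>2 (normal_density 0 \<sigma>\<^sub>2)"
  shows integrable_exp_diff_normal_sq:
      "integrable M (\<lambda>\<omega>. (exp (m\<^sub>2 + X\<^sub>2 \<omega>) - exp (m\<^sub>1 + X\<^sub>1 \<omega>))\<^sup>2)"
    and expectation_exp_diff_normal_sq:
      "expectation (\<lambda>\<omega>. (exp (m\<^sub>2 + X\<^sub>2 \<omega>) - exp (m\<^sub>1 + X\<^sub>1 \<omega>))\<^sup>2) =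
         exp (2 * m\<^sub>1 + 2 * \<sigma>\<^sub>1\<^sup>2) + exp (2 * m\<^sub>2 + 2 * \<sigma>\<^sub>2\<^sup>2)
         - 2 * exp (m\<^sub>1 + m\<^sub>2 + \<sigma>\<^sub>1\<^sup>2 / 2 + \<sigma>\<^sub>2\<^sup>2 / 2)"
proof -
  define e\<^sub>1 where "e\<^sub>1 \<omega> = exp (X\<^sub>1 \<omega> + m\<^sub>1)" for \<omega>
  define e\<^sub>2 where "e\<^sub>2 \<omega> = exp (X\<^sub>2 \<omega> + m\<^sub>2)" for \<omega>
  have sq_eq: "(exp (m\<^sub>2 + X\<^sub>2 \<omega>) - exp (m\<^sub>1 + X\<^sub>1 \<omega>))\<^sup>2 =
      exp (2 * X\<^sub>2 \<omega> + 2 * m\<^sub>2) + exp (2 * X\<^sub>1 \<omega> + 2 * m\<^sub>1) - 2 * (e\<^sub>1 \<omega> * e\<^sub>2 \<omega>)" for \<omega>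
    by (simp add: e\<^sub>1_def e\<^sub>2_def power2_diff power2_eq_square exp_add[symmetric] algebra_simps)
  have indep_e: "indep_var borel e\<^sub>1 borel e\<^sub>2"
    using indep_var_compose[unfolded comp_def, OF indep,
        of "\<lambda>x. exp (x + m\<^sub>1)" borel "\<lambda>x. exp (x + m\<^sub>2)" borel]
    by (simp add: e\<^sub>1_def[abs_def] e\<^sub>2_def[abs_def])
  have int_e: "integrable M e\<^sub>1" "integrable M e\<^sub>2"
    using integrable_exp_normal[OF \<open>\<sigma>\<^sub>1 > 0\<close> X\<^sub>1, of 1 m\<^sub>1]
      integrable_exp_normal[OF \<open>\<sigma>\<^sub>2 > 0\<close> X\<^sub>2, of 1 m\<^sub>2]
    by (simp_all add: e\<^sub>1_def[abs_def] e\<^sub>2_def[abs_def])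
  have "expectation e\<^sub>1 = exp (m\<^sub>1 + \<sigma>\<^sub>1\<^sup>2 / 2)" "expectation e\<^sub>2 = exp (m\<^sub>2 + \<sigma>\<^sub>2\<^sup>2 / 2)"
    unfolding e\<^sub>1_def e\<^sub>2_def
    using expectation_exp_normal[OF \<open>\<sigma>\<^sub>1 > 0\<close> X\<^sub>1, of 1 m\<^sub>1]
      expectation_exp_normal[OF \<open>\<sigma>\<^sub>2 > 0\<close> X\<^sub>2, of 1 m\<^sub>2]
    by simp_all
  then have "integrable M (\<lambda>\<omega>. e\<^sub>1 \<omega> * e\<^sub>2 \<omega>)"
    and "expectation (\<lambda>\<omega>. e\<^sub>1 \<omega> * e\<^sub>2 \<omega>) = exp (m\<^sub>1 + \<sigma>\<^sub>1\<^sup>2 / 2) * exp (m\<^sub>2 + \<sigma>\<^sub>2\<^sup>2 / 2)"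
    using indep_var_integrable[OF indep_e int_e] indep_var_lebesgue_integral[OF indep_e int_e]
    by simp_all
  moreover have "integrable M (\<lambda>\<omega>. exp (2 * X\<^sub>1 \<omega> + 2 * m\<^sub>1))" "integrable M (\<lambda>\<omega>. exp (2 * X\<^sub>2 \<omega> + 2 * m\<^sub>2))"
    by (intro integrable_exp_normal[OF \<open>\<sigma>\<^sub>1 > 0\<close> X\<^sub>1] integrable_exp_normal[OF \<open>\<sigma>\<^sub>2 > 0\<close> X\<^sub>2])+
  moreover have "expectation (\<lambda>\<omega>. exp (2 * X\<^sub>1 \<omega> + 2 * m\<^sub>1)) = exp (2 * m\<^sub>1 + 2 * \<sigma>\<^sub>1\<^sup>2)"
    and "expectation (\<lambda>\<omega>. exp (2 * X\<^sub>2 \<omega> + 2 * m\<^sub>2)) = exp (2 * m\<^sub>2 + 2 * \<sigma>\<^sub>2\<^sup>2)"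
    using expectation_exp_normal[OF \<open>\<sigma>\<^sub>1 > 0\<close> X\<^sub>1] expectation_exp_normal[OF \<open>\<sigma>\<^sub>2 > 0\<close> X\<^sub>2]
    by simp_all
  ultimately show "integrable M (\<lambda>\<omega>. (exp (m\<^sub>2 + X\<^sub>2 \<omega>) - exp (m\<^sub>1 + X\<^sub>1 \<omega>))\<^sup>2)"
    and "expectation (\<lambda>\<omega>. (exp (m\<^sub>2 + X\<^sub>2 \<omega>) - exp (m\<^sub>1 + X\<^sub>1 \<omega>))\<^sup>2) =
         exp (2 * m\<^sub>1 + 2 * \<sigma>\<^sub>1\<^sup>2) + exp (2 * m\<^sub>2 + 2 * \<sigma>\<^sub>2\<^sup>2)
         - 2 * exp (m\<^sub>1 + m\<^sub>2 + \<sigma>\<^sub>1\<^sup>2 / 2 + \<sigma>\<^sub>2\<^sup>2 / 2)"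
    unfolding sq_eq by (simp_all add: exp_add[symmetric] add_ac)
qed

lemma
  fixes X Y :: "'a \<Rightarrow> real"
  assumes indep: "indep_var borel X borel Y"
    and X_sq: "integrable M (\<lambda>\<omega>. (X \<omega>)\<^sup>2)" and Y_sq: "integrable M (\<lambda>\<omega>. (Y \<omega>)\<^sup>2)"
    and "expectation X = 0"
  shows expectation_indep_mult_centred: "expectation (\<lambda>\<omega>. X \<omega> * Y \<omega>) = 0"
    and variance_indep_mult_centred:
      "variance (\<lambda>\<omega>. X \<omega> * Y \<omega>) = expectation (\<lambda>\<omega>. (X \<omega>)\<^sup>2) * expectation (\<lambda>\<omega>. (Y \<omega>)\<^sup>2)"
proof -
  have [measurable]: "X \<in> borel_measurable M" "Y \<in> borel_measurable M"
    using indep_var_rv1[OF indep] indep_var_rv2[OF indep] by simp_all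
  have "integrable M X" "integrable M Y"
    using X_sq Y_sq by (simp_all add: square_integrable_imp_integrable)
  with indep \<open>expectation X = 0\<close> show mean: "expectation (\<lambda>\<omega>. X \<omega> * Y \<omega>) = 0"
    by (simp add: indep_var_lebesgue_integral)
  have "indep_var borel (\<lambda>\<omega>. (X \<omega>)\<^sup>2) borel (\<lambda>\<omega>. (Y \<omega>)\<^sup>2)"
    using indep_var_compose[unfolded comp_def, OF indep, of "\<lambda>x. x\<^sup>2" borel "\<lambda>x. x\<^sup>2" borel] by simp
  then show "variance (\<lambda>\<omega>. X \<omega> * Y \<omega>) = expectation (\<lambda>\<omega>. (X \<omega>)\<^sup>2) * expectation (\<lambda>\<omega>. (Y \<omega>)\<^sup>2)"
    using X_sq Y_sq by (simp add: mean power_mult_distrib indep_var_lebesgue_integral)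
qed

end

lemma logp_eq_sum:
  "logp l0 mu delta i t \<omega> = l0 + mu i * real t + (\<Sum>s\<in>{1..t}. delta i s \<omega>)"
  by (induction t) (simp_all add: algebra_simps)

lemma spread_eq_signed_sum:
  "spread l0 mu delta t \<omega> = (\<Sum>(i, s)\<in>{1::nat, 2} \<times> {1..t}. (-1) ^ i * delta i s \<omega>)"
  by (simp add: spread_def price_def logp_eq_sum sum.cartesian_product[symmetric] sum_negf algebra_simps)

lemma stock_return_eq:
  "stock_return l0 mu delta i t \<omega> = exp (mu i + delta i (Suc t) \<omega>) - 1"
  by (simp add: stock_return_def price_def exp_add)

lemma signal_eq_band_signal:
  "signal l0 mu sd k delta t \<omega> = band_signal (k * spread_sd sd t) (spread l0 mu delta t \<omega>)"
  by (simp add: signal_def band_signal_def)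

locale gaussian_log_price_pair = prob_space +
  fixes sd :: "nat \<Rightarrow> real" and delta :: "nat \<Rightarrow> nat \<Rightarrow> 'a \<Rightarrow> real"
  assumes sd_pos: "i \<in> {1, 2} \<Longrightarrow> sd i > 0"
    and indep_innovations: "indep_vars (\<lambda>_. borel) (\<lambda>(i, s). delta i s) ({1, 2} \<times> {1..})"
    and innovation_distributed:
      "\<And>i s. i \<in> {1, 2} \<Longrightarrow> s \<ge> 1 \<Longrightarrow> distributed M lborel (delta i s) (normal_density 0 (sd i))"
begin

lemma spread_sd_pos: "t \<ge> 1 \<Longrightarrow> spread_sd sd t > 0"
  using sd_pos[of 1] sd_pos[of 2] by (simp add: spread_sd_def add_pos_pos)

lemma spread_distributed:
  assumes "t \<ge> 1"
  shows "distributed M lborel (spread l0 mu delta t) (normal_density 0 (spread_sd sd t))"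
proof -
  define A where "A = {1::nat, 2} \<times> {1..t}"
  define X where "X = (\<lambda>(i, s) \<omega>. (-1) ^ i * delta i s \<omega>)"
  have "indep_vars (\<lambda>_. borel) (\<lambda>(i, s). delta i s) A"
    by (rule indep_vars_subset[OF indep_innovations]) (auto simp: A_def)
  from indep_vars_compose2[OF this, of "\<lambda>p x. (-1) ^ fst p * x" "\<lambda>_. borel"]
  have "indep_vars (\<lambda>_. borel) X A"
    by (simp add: X_def split_beta')
  moreover have "distributed M lborel (X p) (normal_density 0 (sd (fst p)))" if "p \<in> A" for p
    using normal_density_affine[OF innovation_distributed sd_pos, of "fst p" "snd p" "(-1) ^ fst p" 0] that
    by (auto simp: A_def X_def split_beta)
  ultimately have "distributed M lborel (\<lambda>\<omega>. \<Sum>p\<in>A. X p \<omega>)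
      (normal_density (\<Sum>p\<in>A. 0) (sqrt (\<Sum>p\<in>A. (sd (fst p))\<^sup>2)))"
    using assms by (intro sum_indep_normal) (auto simp: A_def intro: sd_pos)
  moreover have "(\<Sum>p\<in>A. (sd (fst p))\<^sup>2) = real t * ((sd 1)\<^sup>2 + (sd 2)\<^sup>2)"
    by (simp add: A_def sum.cartesian_product' algebra_simps)
  ultimately show ?thesis
    by (simp add: spread_eq_signed_sum[abs_def] spread_sd_def A_def X_def split_beta)
qed

lemma indep_spread_stock_return_diff:
  "indep_var borel (spread l0 mu delta t)
     borel (\<lambda>\<omega>. stock_return l0 mu delta 2 t \<omega> - stock_return l0 mu delta 1 t \<omega>)"
proof -
  define A where "A = {1::nat, 2} \<times> {1..t}"
  define B where "B = {1::nat, 2} \<times> {Suc t}"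
  define X where "X = (\<lambda>(i, s). delta i s)"
  define F where "F g = (\<Sum>p\<in>A. (-1) ^ fst p * g p)" for g :: "nat \<times> nat \<Rightarrow> real"
  define G where "G g = exp (mu 2 + g (2, Suc t)) - exp (mu 1 + g (1, Suc t))" for g :: "nat \<times> nat \<Rightarrow> real"
  have "indep_var (PiM A (\<lambda>_. borel)) (\<lambda>\<omega>. restrict (\<lambda>p. X p \<omega>) A)
      (PiM B (\<lambda>_. borel)) (\<lambda>\<omega>. restrict (\<lambda>p. X p \<omega>) B)"
    unfolding X_def by (rule indep_var_restrict[OF indep_innovations]) (auto simp: A_def B_def)
  moreover have "F \<in> borel_measurable (PiM A (\<lambda>_. borel))"
    unfolding F_def
    by (intro borel_measurable_sum borel_measurable_times borel_measurable_const)
       (auto intro: measurable_component_singleton)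
  moreover have "G \<in> borel_measurable (PiM B (\<lambda>_. borel))"
    unfolding G_def B_def by measurable
  ultimately have "indep_var borel (F \<circ> (\<lambda>\<omega>. restrict (\<lambda>p. X p \<omega>) A))
      borel (G \<circ> (\<lambda>\<omega>. restrict (\<lambda>p. X p \<omega>) B))"
    by (rule indep_var_compose)
  moreover have "F \<circ> (\<lambda>\<omega>. restrict (\<lambda>p. X p \<omega>) A) = spread l0 mu delta t"
    by (auto simp: fun_eq_iff spread_eq_signed_sum F_def A_def X_def split_beta intro!: sum.cong)
  moreover have "G \<circ> (\<lambda>\<omega>. restrict (\<lambda>p. X p \<omega>) B) =
      (\<lambda>\<omega>. stock_return l0 mu delta 2 t \<omega> - stock_return l0 mu delta 1 t \<omega>)"
    by (simp add: fun_eq_iff stock_return_eq G_def B_def X_def)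
  ultimately show ?thesis
    by simp
qed

lemma indep_signal_stock_return_diff:
  "indep_var borel (signal l0 mu sd k delta t)
     borel (\<lambda>\<omega>. stock_return l0 mu delta 2 t \<omega> - stock_return l0 mu delta 1 t \<omega>)"
proof -
  have "indep_var borel (band_signal (k * spread_sd sd t) \<circ> spread l0 mu delta t)
      borel (id \<circ> (\<lambda>\<omega>. stock_return l0 mu delta 2 t \<omega> - stock_return l0 mu delta 1 t \<omega>))"
    by (rule indep_var_compose[OF indep_spread_stock_return_diff]) simp_all
  then show ?thesis
    by (simp add: comp_def signal_eq_band_signal[abs_def])
qed

lemma indep_innovations_at:
  "s \<ge> 1 \<Longrightarrow> indep_var borel (delta 1 s) borel (delta 2 s)"
  using indep_vars_imp_indep_var[OF indep_innovations, of "(1, s)" "(2, s)"] by simp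

lemma
  assumes "t \<ge> 1" "k > 0"
  shows integrable_signal_sq: "integrable M (\<lambda>\<omega>. (signal l0 mu sd k delta t \<omega>)\<^sup>2)"
    and expectation_signal: "expectation (signal l0 mu sd k delta t) = 0"
    and expectation_signal_sq:
      "expectation (\<lambda>\<omega>. (signal l0 mu sd k delta t \<omega>)\<^sup>2) =
         2 * measure (density lborel std_normal_density) {k..}"
proof -
  have s: "spread_sd sd t > 0"
    using spread_sd_pos[OF \<open>t \<ge> 1\<close>] .
  note spread = spread_distributed[OF \<open>t \<ge> 1\<close>, of l0 mu]
  show "integrable M (\<lambda>\<omega>. (signal l0 mu sd k delta t \<omega>)\<^sup>2)"
    using distributed_measurable[OF spread]
    by (simp add: signal_eq_band_signal integrable_band_signal_sq)
  show "expectation (signal l0 mu sd k delta t) = 0"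
    using expectation_band_signal_normal[OF s _ spread] s \<open>k > 0\<close>
    by (simp add: signal_eq_band_signal[abs_def])
  show "expectation (\<lambda>\<omega>. (signal l0 mu sd k delta t \<omega>)\<^sup>2) =
      2 * measure (density lborel std_normal_density) {k..}"
    using expectation_band_signal_normal_sq[OF s _ spread, of "k * spread_sd sd t"] s \<open>k > 0\<close>
    by (simp add: signal_eq_band_signal)
qed

lemma
  shows integrable_stock_return_diff_sq:
      "integrable M (\<lambda>\<omega>. (stock_return l0 mu delta 2 t \<omega> - stock_return l0 mu delta 1 t \<omega>)\<^sup>2)"
    and expectation_stock_return_diff_sq:
      "expectation (\<lambda>\<omega>. (stock_return l0 mu delta 2 t \<omega> - stock_return l0 mu delta 1 t \<omega>)\<^sup>2) =
         exp (2 * mu 1 + 2 * (sd 1)\<^sup>2) + exp (2 * mu 2 + 2 * (sd 2)\<^sup>2)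
         - 2 * exp (mu 1 + mu 2 + (sd 1)\<^sup>2 / 2 + (sd 2)\<^sup>2 / 2)"
proof -
  have sd: "sd 1 > 0" "sd 2 > 0"
    by (simp_all add: sd_pos)
  have indep: "indep_var borel (delta 1 (Suc t)) borel (delta 2 (Suc t))"
    by (rule indep_innovations_at) simp
  have X\<^sub>1: "distributed M lborel (delta 1 (Suc t)) (normal_density 0 (sd 1))"
    and X\<^sub>2: "distributed M lborel (delta 2 (Suc t)) (normal_density 0 (sd 2))"
    by (simp_all add: innovation_distributed)
  show "integrable M (\<lambda>\<omega>. (stock_return l0 mu delta 2 t \<omega> - stock_return l0 mu delta 1 t \<omega>)\<^sup>2)"
    using integrable_exp_diff_normal_sq[OF sd indep X\<^sub>1 X\<^sub>2] by (simp add: stock_return_eq)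
  show "expectation (\<lambda>\<omega>. (stock_return l0 mu delta 2 t \<omega> - stock_return l0 mu delta 1 t \<omega>)\<^sup>2) =
      exp (2 * mu 1 + 2 * (sd 1)\<^sup>2) + exp (2 * mu 2 + 2 * (sd 2)\<^sup>2)
      - 2 * exp (mu 1 + mu 2 + (sd 1)\<^sup>2 / 2 + (sd 2)\<^sup>2 / 2)"
    using expectation_exp_diff_normal_sq[OF sd indep X\<^sub>1 X\<^sub>2] by (simp add: stock_return_eq)
qed

end

theorem theorem3:
  fixes M :: "'a measure" and mu sd :: "nat \<Rightarrow> real" and k l0 :: real
    and delta :: "nat \<Rightarrow> nat \<Rightarrow> 'a \<Rightarrow> real" and t :: nat
  assumes "prob_space M"
    and "sd 1 > 0" and "sd 2 > 0" and "k > 0"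
    and "prob_space.indep_vars M (\<lambda>_. borel) (\<lambda>(i, s). delta i s) ({1, 2} \<times> {1..})"
    and "\<And>i s. i \<in> {1, 2} \<Longrightarrow> s \<ge> 1 \<Longrightarrow>
           distributed M lborel (delta i s) (normal_density 0 (sd i))"
    and "t \<ge> 1"
  shows "prob_space.expectation M (pair_return l0 mu sd k delta t) = 0
    \<and> prob_space.variance M (pair_return l0 mu sd k delta t) =
        2 * measure (density lborel std_normal_density) {k..} *
        (exp (2 * mu 1 + 2 * (sd 1)\<^sup>2) + exp (2 * mu 2 + 2 * (sd 2)\<^sup>2)
         - 2 * exp (mu 1 + mu 2 + (sd 1)\<^sup>2 / 2 + (sd 2)\<^sup>2 / 2))"
proof -
  interpret gaussian_log_price_pair M sd delta
    using assms(2,3)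
    by (intro gaussian_log_price_pair.intro gaussian_log_price_pair_axioms.intro assms(1,5,6)) auto
  define S where "S = signal l0 mu sd k delta t"
  define D where "D \<omega> = stock_return l0 mu delta 2 t \<omega> - stock_return l0 mu delta 1 t \<omega>" for \<omega>
  have indep: "indep_var borel S borel D"
    unfolding S_def D_def[abs_def] by (rule indep_signal_stock_return_diff)
  have S_sq: "integrable M (\<lambda>\<omega>. (S \<omega>)\<^sup>2)" and "expectation S = 0"
    and "expectation (\<lambda>\<omega>. (S \<omega>)\<^sup>2) = 2 * measure (density lborel std_normal_density) {k..}"
    unfolding S_def using integrable_signal_sq expectation_signal expectation_signal_sq assms(4,7)
    by blast+
  moreover note D_sq = integrable_stock_return_diff_sq[of l0 mu t, folded D_def]
  moreover have "pair_return l0 mu sd k delta t = (\<lambda>\<omega>. S \<omega> * D \<omega>)"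
    by (simp add: fun_eq_iff pair_return_def S_def D_def)
  ultimately show ?thesis
    using expectation_indep_mult_centred[OF indep S_sq D_sq]
      variance_indep_mult_centred[OF indep S_sq D_sq]
      expectation_stock_return_diff_sq[of l0 mu t, folded D_def]
    by simp
qed

end
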